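(* Let $\mathcal{F}$ be an argumentation framework and $S\subseteq A_{\mathcal{F}}$. For each $a\in A_{\mathcal{F}}$ and each ordinal $\alpha$, $$C^\alpha_S(a)=\{b: a\Rightarrow^{A_{\mathcal{F}}\setminus\Delta^\alpha_{\mathcal{F},S}}_{\mathcal{F}}b\ \text{ and }\ b\Rightarrow^{A_{\mathcal{F}}\setminus\Delta^\alpha_{\mathcal{F},S}}_{\mathcal{F}}a\}.$$
   Context: An argumentation framework is $\mathcal{F}=(A_{\mathcal{F}},R_{\mathcal{F}})$ with $R_{\mathcal{F}}\subseteq A_{\mathcal{F}}\times A_{\mathcal{F}}$; $a\rightarrow b$ means $(a,b)\in R_{\mathcal{F}}$. $\mathcal{F}|_B=(A_{\mathcal{F}}\cap B,R_{\mathcal{F}}\cap(B\times B))$. $\mathrm{SCC}(a)$ is the set of $b$ with directed attack paths (possibly of length 0) from $a$ to $b$ and from $b$ to $a$. $D_S(X)=\{b\in X:\exists a\in S\setminus X,\ a\rightarrow b\}$. $C^0_S(a)=\mathrm{SCC}(a)$; $C^{\alpha+1}_S(a)$ = the strongly connected component of $a$ in $\mathcal{F}|_{C^\alpha_S(a)\setminus D_S(C^\alpha_S(a))}$ (empty if $a$ is not in that set); for limit $\lambda$, $C^\lambda_S(a)$ = the strongly connected component of $a$ in $\mathcal{F}|_{\bigcap_{\alpha<\lambda}C^\alpha_S(a)}$. $a\Rightarrow^B_{\mathcal{F}}b$ ($b$ reachable from $a$ modulo $B$) means there is a directed attack path from $a$ to $b$ in $\mathcal{F}|_B$. For $D\subseteq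 A_{\mathcal{F}}$, $\Delta_{\mathcal{F},S}(D)=\{a\in A_{\mathcal{F}}:\exists b\in S\,(b\rightarrow a\text{ and not }a\Rightarrow^{A_{\mathcal{F}}\setminus D}_{\mathcal{F}}b)\}$. The iterates are $\Delta^0_{\mathcal{F},S}=\emptyset$, $\Delta^{\alpha+1}_{\mathcal{F},S}=\Delta_{\mathcal{F},S}(\Delta^\alpha_{\mathcal{F},S})$, and $\Delta^\lambda_{\mathcal{F},S}=\bigcup_{\alpha<\lambda}\Delta^\alpha_{\mathcal{F},S}$ for limit $\lambda$. *)

theory Defs
  imports Main
begin

text \<open>An argumentation framework is given by its set of arguments A and its
attack relation R (with R \<subseteq> A \<times> A).\<close>

text \<open>reach A R B a b: there is a directed attack path (possibly of length 0)
from a to b in the restricted framework F|_B.\<close>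
definition reach :: "'a set \<Rightarrow> ('a \<times> 'a) set \<Rightarrow> 'a set \<Rightarrow> 'a \<Rightarrow> 'a \<Rightarrow> bool" where
  "reach A R B a b \<longleftrightarrow>
     (a, b) \<in> Id_on (A \<inter> B) \<union> (R \<inter> ((A \<inter> B) \<times> (A \<inter> B)))\<^sup>+"

text \<open>Strongly connected component of a in F|_X (empty if a is not in A \<inter> X).\<close>
definition scc_in :: "'a set \<Rightarrow> ('a \<times> 'a) set \<Rightarrow> 'a set \<Rightarrow> 'a \<Rightarrow> 'a set" where
  "scc_in A R X a = {b. reach A R X a b \<and> reach A R X b a}"

definition SCC :: "'a set \<Rightarrow> ('a \<times> 'a) set \<Rightarrow> 'a \<Rightarrow> 'a set" where
  "SCC A R a = scc_in A R A a"

definition D_set :: "('a \<times> 'a) set \<Rightarrow> 'a set \<Rightarrow> 'a set \<Rightarrow> 'a set" where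
  "D_set R S X = {b \<in> X. \<exists>a \<in> S - X. (a, b) \<in> R}"

definition Delta_op :: "'a set \<Rightarrow> ('a \<times> 'a) set \<Rightarrow> 'a set \<Rightarrow> 'a set \<Rightarrow> 'a set" where
  "Delta_op A R S D = {a \<in> A. \<exists>b \<in> S. (b, a) \<in> R \<and> \<not> reach A R (A - D) a b}"

text \<open>Transfinite recursion over a well-ordered type 'o (ordinals are represented
by elements of an arbitrary well-ordered type): z at the least element, s applied
to the value at the immediate predecessor at successor points, and l applied to the
set of earlier values at limit points.\<close>
definition ord_rec :: "'b \<Rightarrow> ('b \<Rightarrow> 'b) \<Rightarrow> ('b set \<Rightarrow> 'b) \<Rightarrow> 'o::wellorder \<Rightarrow> 'b" where
  "ord_rec z s l = wfrec {(x, y). x < y}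
     (\<lambda>f \<alpha>. if \<forall>\<beta>. \<not> \<beta> < \<alpha> then z
            else if \<exists>\<beta>. \<beta> < \<alpha> \<and> (\<forall>\<gamma>. \<gamma> < \<alpha> \<longrightarrow> \<gamma> \<le> \<beta>)
            then s (f (THE \<beta>. \<beta> < \<alpha> \<and> (\<forall>\<gamma>. \<gamma> < \<alpha> \<longrightarrow> \<gamma> \<le> \<beta>)))
            else l (f ` {\<beta>. \<beta> < \<alpha>}))"

definition C_iter :: "'a set \<Rightarrow> ('a \<times> 'a) set \<Rightarrow> 'a set \<Rightarrow> 'a \<Rightarrow> 'o::wellorder \<Rightarrow> 'a set" where
  "C_iter A R S a = ord_rec (SCC A R a)
     (\<lambda>X. scc_in A R (X - D_set R S X) a)
     (\<lambda>Xs. scc_in A R (\<Inter> Xs) a)"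

definition Delta_iter :: "'a set \<Rightarrow> ('a \<times> 'a) set \<Rightarrow> 'a set \<Rightarrow> 'o::wellorder \<Rightarrow> 'a set" where
  "Delta_iter A R S = ord_rec {} (Delta_op A R S) (\<lambda>Ds. \<Union> Ds)"

end

theory Submission
  imports Defs
begin

text \<open>By transfinite induction, C^\<alpha>_S(a) is the strongly connected component of a in
F|_(A - \<Delta>^\<alpha>). Everything rests on one observation: a path in F|_B between two members
of an SCC of F|_B never leaves that SCC, so the SCC of a does not change when B is shrunk to
any set still containing it. At a successor stage, with X the SCC of a in F|_(A - \<Delta>^\<alpha>),
an argument x of X attacked by some b in S lies in D_S(X) iff b is outside X, iff x does not
reach b in F|_(A - \<Delta>^\<alpha>), i.e. iff x lies in \<Delta>^(\<alpha>+1); so X - D_S(X) = X - \<Delta>^(\<alpha>+1).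
At a limit stage the SCC of a in an intersection of SCCs is its SCC in the intersection of
the underlying sets. The \<Delta>^\<alpha> increase with \<alpha> because \<Delta>_F,S is monotone.\<close>

lemma the_greatest_below:
  fixes \<alpha> p :: "'o::wellorder"
  assumes "p < \<alpha>" and "\<forall>\<gamma>. \<gamma> < \<alpha> \<longrightarrow> \<gamma> \<le> p"
  shows "(THE \<beta>. \<beta> < \<alpha> \<and> (\<forall>\<gamma>. \<gamma> < \<alpha> \<longrightarrow> \<gamma> \<le> \<beta>)) = p"
  using assms by (intro the_equality) (auto intro: antisym)

lemma ord_rec_unfold:
  "ord_rec z s l (\<alpha>::'o::wellorder) =
     (if \<forall>\<beta>. \<not> \<beta> < \<alpha> then z
      else if \<exists>\<beta>. \<beta> < \<alpha> \<and> (\<forall>\<gamma>. \<gamma> < \<alpha> \<longrightarrow> \<gamma> \<le> \<beta>)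
      then s (ord_rec z s l (THE \<beta>. \<beta> < \<alpha> \<and> (\<forall>\<gamma>. \<gamma> < \<alpha> \<longrightarrow> \<gamma> \<le> \<beta>)))
      else l (ord_rec z s l ` {\<beta>. \<beta> < \<alpha>}))"
  unfolding ord_rec_def
  by (subst wfrec[OF wf]) (auto simp: cut_apply the_greatest_below image_def)

lemma ord_rec_least:
  "(\<And>\<beta>. \<not> \<beta> < (\<alpha>::'o::wellorder)) \<Longrightarrow> ord_rec z s l \<alpha> = z"
  by (subst ord_rec_unfold) simp

lemma ord_rec_succ:
  assumes "p < (\<alpha>::'o::wellorder)" and "\<And>\<gamma>. \<gamma> < \<alpha> \<Longrightarrow> \<gamma> \<le> p"
  shows "ord_rec z s l \<alpha> = s (ord_rec z s l p)"
  using assms by (subst ord_rec_unfold) (auto simp: the_greatest_below)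

lemma ord_rec_limit:
  assumes "\<beta> < (\<alpha>::'o::wellorder)" and "\<And>p. p < \<alpha> \<Longrightarrow> \<exists>\<gamma><\<alpha>. p < \<gamma>"
  shows "ord_rec z s l \<alpha> = l (ord_rec z s l ` {\<beta>. \<beta> < \<alpha>})"
  using assms by (subst ord_rec_unfold) (auto simp: not_le[symmetric])

lemma wellorder_stage_cases:
  fixes \<alpha> :: "'o::wellorder"
  obtains (least) "\<And>\<beta>. \<not> \<beta> < \<alpha>"
  | (succ) p where "p < \<alpha>" "\<And>\<gamma>. \<gamma> < \<alpha> \<Longrightarrow> \<gamma> \<le> p"
  | (limit) \<beta> where "\<beta> < \<alpha>" "\<And>p. p < \<alpha> \<Longrightarrow> \<exists>\<gamma><\<alpha>. p < \<gamma>"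
  by (meson not_le)

lemma reach_iff_rtrancl:
  "reach A R B x y \<longleftrightarrow> x \<in> A \<inter> B \<and> (x, y) \<in> (Restr R (A \<inter> B))\<^sup>*"
  unfolding reach_def by (auto simp: rtrancl_eq_or_trancl Id_on_def dest: tranclD)

lemma reach_in_carrier: "reach A R B x y \<Longrightarrow> x \<in> A \<inter> B \<and> y \<in> A \<inter> B"
  unfolding reach_def by (auto simp: Id_on_def dest: tranclD tranclD2)

lemma reach_refl: "x \<in> A \<inter> B \<Longrightarrow> reach A R B x x"
  unfolding reach_iff_rtrancl by simp

lemma reach_edge: "(x, y) \<in> R \<Longrightarrow> x \<in> A \<inter> B \<Longrightarrow> y \<in> A \<inter> B \<Longrightarrow> reach A R B x y"
  unfolding reach_iff_rtrancl by auto

lemma reach_trans: "reach A R B x y \<Longrightarrow> reach A R B y z \<Longrightarrow> reach A R B x z"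
  unfolding reach_iff_rtrancl by auto

lemma reach_mono: "B \<subseteq> B' \<Longrightarrow> reach A R B x y \<Longrightarrow> reach A R B' x y"
  unfolding reach_iff_rtrancl by (auto elim: rtrancl_mono[THEN subsetD, rotated])

lemma scc_in_mono: "B \<subseteq> B' \<Longrightarrow> scc_in A R B a \<subseteq> scc_in A R B' a"
  unfolding scc_in_def by (auto intro: reach_mono)

lemma scc_in_subset: "scc_in A R B a \<subseteq> A \<inter> B"
  unfolding scc_in_def by (auto dest: reach_in_carrier)

lemma reach_within_scc_in:
  assumes x: "x \<in> scc_in A R B a" and y: "y \<in> scc_in A R B a" and "reach A R B x y"
  shows "reach A R (scc_in A R B a) x y"
proof -
  let ?C = "scc_in A R B a"
  have x_carrier: "x \<in> A \<inter> B" and "(x, y) \<in> (Restr R (A \<inter> B))\<^sup>*"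
    using \<open>reach A R B x y\<close> by (simp_all add: reach_iff_rtrancl)
  from this(2) y show ?thesis
  proof (induction rule: rtrancl_induct)
    case base
    then show ?case using x scc_in_subset[of A R B a] by (blast intro: reach_refl)
  next
    case (step y z)
    have yz: "reach A R B y z" using step.hyps(2) by (blast intro: reach_edge)
    have "reach A R B a y"
      using x step.hyps(1) x_carrier by (auto simp: scc_in_def reach_iff_rtrancl)
    moreover have "reach A R B y a"
      using yz step.prems by (auto simp: scc_in_def intro: reach_trans)
    ultimately have "y \<in> ?C" by (simp add: scc_in_def)
    then have "reach A R ?C y z"
      using step.hyps(2) step.prems scc_in_subset[of A R B a] by (blast intro: reach_edge)
    with step.IH[OF \<open>y \<in> ?C\<close>] show ?case by (rule reach_trans)
  qed
qed

lemma scc_in_restrict: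
  assumes "scc_in A R B a \<subseteq> B'" and "B' \<subseteq> B"
  shows "scc_in A R B' a = scc_in A R B a"
proof
  show "scc_in A R B' a \<subseteq> scc_in A R B a" using assms(2) by (rule scc_in_mono)
next
  show "scc_in A R B a \<subseteq> scc_in A R B' a"
  proof
    fix b assume b: "b \<in> scc_in A R B a"
    then have "a \<in> A \<inter> B" by (auto simp: scc_in_def dest: reach_in_carrier)
    then have a: "a \<in> scc_in A R B a" by (simp add: scc_in_def reach_refl)
    from b have "reach A R B a b" "reach A R B b a" by (simp_all add: scc_in_def)
    with a b have "reach A R (scc_in A R B a) a b" "reach A R (scc_in A R B a) b a"
      by (simp_all add: reach_within_scc_in)
    with assms(1) show "b \<in> scc_in A R B' a" by (auto simp: scc_in_def intro: reach_mono)
  qed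
qed

lemma scc_in_scc_in_Diff: "scc_in A R (scc_in A R B a - E) a = scc_in A R (B - E) a"
  using scc_in_subset[of A R "B - E" a] scc_in_mono[of "B - E" B A R a] scc_in_subset[of A R B a]
  by (intro scc_in_restrict) blast+

lemma scc_in_INT_scc_in:
  assumes "I \<noteq> {}"
  shows "scc_in A R (\<Inter>i\<in>I. scc_in A R (B i) a) a = scc_in A R (\<Inter>i\<in>I. B i) a"
proof (rule scc_in_restrict)
  show "scc_in A R (\<Inter>i\<in>I. B i) a \<subseteq> (\<Inter>i\<in>I. scc_in A R (B i) a)"
    by (auto intro: scc_in_mono[THEN subsetD, rotated])
  show "(\<Inter>i\<in>I. scc_in A R (B i) a) \<subseteq> (\<Inter>i\<in>I. B i)"
    using assms scc_in_subset[of A R "B _" a] by blast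
qed

lemma ord_rec_Sup_increasing:
  fixes f :: "'b::complete_lattice \<Rightarrow> 'b" and \<beta> \<alpha> :: "'o::wellorder"
  assumes "mono f" and "\<beta> \<le> \<alpha>"
  shows "ord_rec bot f Sup \<beta> \<le> ord_rec bot f Sup \<alpha>"
proof -
  let ?T = "ord_rec bot f Sup :: 'o \<Rightarrow> 'b"
  have "(\<forall>\<beta><\<alpha>. ?T \<beta> \<le> ?T \<alpha>) \<and> ?T \<alpha> \<le> f (?T \<alpha>)" for \<alpha>
  proof (induction \<alpha> rule: less_induct)
    case (less \<alpha>)
    show ?case
    proof (cases \<alpha> rule: wellorder_stage_cases)
      case least
      then show ?thesis by (simp add: ord_rec_least)
    next
      case (succ p)
      have "?T \<beta> \<le> ?T p" if "\<beta> < \<alpha>" for \<beta>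
        using less.IH[OF succ(1)] succ(2)[OF that] by (cases "\<beta> = p") auto
      moreover have "?T p \<le> f (?T p)" using less.IH[OF succ(1)] by blast
      ultimately show ?thesis
        using succ \<open>mono f\<close> by (auto simp: ord_rec_succ[OF succ] dest: monoD intro: order_trans)
    next
      case (limit \<beta>)
      have below: "?T \<gamma> \<le> ?T \<alpha>" if "\<gamma> < \<alpha>" for \<gamma>
        using that by (auto simp: ord_rec_limit[OF limit] intro: SUP_upper)
      have "?T \<gamma> \<le> f (?T \<alpha>)" if "\<gamma> < \<alpha>" for \<gamma>
        using less.IH[OF that] monoD[OF \<open>mono f\<close> below[OF that]] by (blast intro: order_trans)
      then have "?T \<alpha> \<le> f (?T \<alpha>)" by (subst (1) ord_rec_limit[OF limit]) (auto intro: SUP_least)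
      with below show ?thesis by blast
    qed
  qed
  with \<open>\<beta> \<le> \<alpha>\<close> show ?thesis by (cases "\<beta> = \<alpha>") auto
qed

lemma Delta_op_mono: "mono (Delta_op A R S)"
  unfolding Delta_op_def by (rule monoI) (auto intro: reach_mono[rotated])

lemma Delta_iter_mono: "\<beta> \<le> \<alpha> \<Longrightarrow> Delta_iter A R S \<beta> \<subseteq> Delta_iter A R S \<alpha>"
  unfolding Delta_iter_def by (rule ord_rec_Sup_increasing[OF Delta_op_mono])

lemma D_set_scc_in:
  "D_set R S (scc_in A R (A - D) a) = scc_in A R (A - D) a \<inter> Delta_op A R S D"
  (is "D_set R S ?X = ?X \<inter> _")
proof (intro set_eqI iffI)
  fix x assume "x \<in> D_set R S ?X"
  then obtain b where x: "x \<in> ?X" and b: "b \<in> S" "b \<notin> ?X" "(b, x) \<in> R"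
    unfolding D_set_def by blast
  have "\<not> reach A R (A - D) x b"
  proof
    assume xb: "reach A R (A - D) x b"
    then have "reach A R (A - D) b x" using b(3) by (blast dest: reach_in_carrier intro: reach_edge)
    with x xb have "b \<in> ?X" by (auto simp: scc_in_def intro: reach_trans)
    with b(2) show False ..
  qed
  with x b show "x \<in> ?X \<inter> Delta_op A R S D"
    using scc_in_subset[of A R "A - D" a] unfolding Delta_op_def by blast
next
  fix x assume "x \<in> ?X \<inter> Delta_op A R S D"
  then obtain b where x: "x \<in> ?X" and b: "b \<in> S" "(b, x) \<in> R" "\<not> reach A R (A - D) x b"
    unfolding Delta_op_def by blast
  have "b \<notin> ?X"
    using x b(3) by (auto simp: scc_in_def intro: reach_trans)
  with x b show "x \<in> D_set R S ?X" unfolding D_set_def by blast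
qed

theorem C_iter_eq_scc_in:
  fixes \<alpha> :: "'o::wellorder"
  shows "C_iter A R S a \<alpha> = scc_in A R (A - Delta_iter A R S \<alpha>) a"
proof (induction \<alpha> rule: less_induct)
  case (less \<alpha>)
  show ?case
  proof (cases \<alpha> rule: wellorder_stage_cases)
    case least
    then show ?thesis
      by (simp add: C_iter_def Delta_iter_def ord_rec_least SCC_def)
  next
    case (succ p)
    let ?X = "C_iter A R S a p"
    have Delta_succ: "Delta_iter A R S \<alpha> = Delta_op A R S (Delta_iter A R S p)"
      unfolding Delta_iter_def by (rule ord_rec_succ[OF succ])
    have "C_iter A R S a \<alpha> = scc_in A R (?X - D_set R S ?X) a"
      unfolding C_iter_def by (rule ord_rec_succ[OF succ])
    also have "?X - D_set R S ?X = ?X - Delta_iter A R S \<alpha>"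
      using Delta_succ
      unfolding less.IH[OF succ(1)] D_set_scc_in by blast
    also have "scc_in A R (?X - Delta_iter A R S \<alpha>) a = scc_in A R (A - Delta_iter A R S \<alpha>) a"
    proof -
      have "A - Delta_iter A R S p - Delta_iter A R S \<alpha> = A - Delta_iter A R S \<alpha>"
        using Delta_iter_mono[OF less_imp_le[OF succ(1)], of A R S] by blast
      then show ?thesis by (simp add: less.IH[OF succ(1)] scc_in_scc_in_Diff)
    qed
    finally show ?thesis .
  next
    case (limit \<beta>)
    have "C_iter A R S a \<alpha> = scc_in A R (\<Inter>\<gamma>\<in>{\<gamma>. \<gamma> < \<alpha>}. C_iter A R S a \<gamma>) a"
      unfolding C_iter_def by (rule ord_rec_limit[OF limit])
    also have "\<dots> = scc_in A R (\<Inter>\<gamma>\<in>{\<gamma>. \<gamma> < \<alpha>}. scc_in A R (A - Delta_iter A R S \<gamma>) a) a"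
      using less.IH by (simp cong: INF_cong_simp)
    also have "\<dots> = scc_in A R (\<Inter>\<gamma>\<in>{\<gamma>. \<gamma> < \<alpha>}. A - Delta_iter A R S \<gamma>) a"
      using limit(1) by (intro scc_in_INT_scc_in) blast
    also have "(\<Inter>\<gamma>\<in>{\<gamma>. \<gamma> < \<alpha>}. A - Delta_iter A R S \<gamma>) = A - Delta_iter A R S \<alpha>"
      using limit(1) by (auto simp: Delta_iter_def ord_rec_limit[OF limit])
    finally show ?thesis .
  qed
qed

theorem lemma2:
  fixes A :: "'a set" and R :: "('a \<times> 'a) set" and S :: "'a set"
    and a :: 'a and \<alpha> :: "'o::wellorder"
  assumes "R \<subseteq> A \<times> A" and "S \<subseteq> A" and "a \<in> A"
  shows "C_iter A R S a \<alpha> =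
           {b. reach A R (A - Delta_iter A R S \<alpha>) a b \<and> reach A R (A - Delta_iter A R S \<alpha>) b a}"
  using C_iter_eq_scc_in unfolding scc_in_def .

end
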